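(* Let $\mathbb{P}: M_2 \to M_2$ be the linear map $$\mathbb{P}\begin{pmatrix} x_{11} & x_{12} \\ x_{21} & x_{22}\end{pmatrix} = \begin{pmatrix} \frac{x_{11}+x_{22}}{2} & x_{12} \\ x_{21} & \frac{x_{11}+x_{22}}{2}\end{pmatrix},$$ and define on operators on $\mathbb{C}^2\otimes\mathbb{C}^2\otimes\mathbb{C}^2$ $$\Phi_3(\varrho) = (\mathbb{P}\otimes\mathbb{I}\otimes\mathbb{I})(\varrho) + (\mathbb{I}\otimes\mathbb{P}\otimes\mathbb{I})(\varrho) + (\mathbb{I}\otimes\mathbb{I}\otimes\mathbb{P})(\varrho) + \tfrac12\,\mathrm{Tr}(\varrho)\, I,$$ with $\mathbb{I}$ the identity map on $M_2$ and $I$ the $8\times8$ identity. Let $|GHZ\rangle=\frac{1}{\sqrt2}(|000\rangle+|111\rangle)$ and $\mathcal{W}=\Phi_3(|GHZ\rangle\langle GHZ|)$. Then $\mathcal{W}$ is a genuine tripartite entanglement witness: $\mathrm{Tr}(\mathcal{W}\rho)\ge 0$ for every biseparable three-qubit state $\rho$, while for the genuinely entangled state $|\widetilde{GHZ}\rangle=\frac{1}{\sqrt2}(|000\rangle-|111\rangle)$ one has $\mathrm{Tr}(\mathcal{W}\,|\widetilde{GHZ}\rangle\langle\widetilde{GHZ}|)=-\frac14<0$.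
   Context: A three-qubit state $\rho$ is biseparable if it can be written as $\rho = p_1\,\rho_1\otimes\rho_{23} + p_2\,\rho_2\otimes\rho_{13} + p_3\,\rho_3\otimes\rho_{12}$ (each term across the indicated bipartition $1|23$, $2|13$, $3|12$), where $p_i\ge 0$, $\sum_i p_i=1$, and $\rho_i$, $\rho_{jk}$ are density matrices on the indicated qubits; a state that is not biseparable is genuinely (tripartite) entangled. $M_2$ is the space of complex $2\times 2$ matrices and $\{|0\rangle,|1\rangle\}$ the standard basis of $\mathbb{C}^2$. *)

theory Defs
  imports "HOL-Analysis.Analysis"
begin

text \<open>Qubit index type: the numeral type 2 = {0,1}; three-qubit index = 2 x 2 x 2,
  ordered as (qubit 1, qubit 2, qubit 3). Matrices are HOL-Analysis matrices.\<close>

type_synonym qidx = "2"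
type_synonym idx2 = "2 \<times> 2"
type_synonym idx3 = "2 \<times> 2 \<times> 2"
type_synonym mat2 = "complex^2^2"
type_synonym mat4 = "complex^idx2^idx2"
type_synonym mat8 = "complex^idx3^idx3"

definition cmat_adj :: "complex^'n^'n \<Rightarrow> complex^'n^'n" where
  "cmat_adj A = (\<chi> i j. cnj (A $ j $ i))"

definition hermitian_mat :: "complex^'n^'n \<Rightarrow> bool" where
  "hermitian_mat A \<longleftrightarrow> cmat_adj A = A"

definition psd_mat :: "complex^'n^'n \<Rightarrow> bool" where
  "psd_mat A \<longleftrightarrow> (\<forall>v :: complex^'n.
     let q = (\<Sum>i\<in>UNIV. cnj (v $ i) * (A *v v) $ i) in Im q = 0 \<and> 0 \<le> Re q)"

definition density_mat :: "complex^'n^'n \<Rightarrow> bool" where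
  "density_mat A \<longleftrightarrow> hermitian_mat A \<and> psd_mat A \<and> trace A = 1"

definition tensor_1_23 :: "mat2 \<Rightarrow> mat4 \<Rightarrow> mat8" where
  "tensor_1_23 A B = (\<chi> i j. case (i, j) of ((i1,i2,i3), (j1,j2,j3)) \<Rightarrow> A $ i1 $ j1 * B $ (i2,i3) $ (j2,j3))"

definition tensor_2_13 :: "mat2 \<Rightarrow> mat4 \<Rightarrow> mat8" where
  "tensor_2_13 A B = (\<chi> i j. case (i, j) of ((i1,i2,i3), (j1,j2,j3)) \<Rightarrow> A $ i2 $ j2 * B $ (i1,i3) $ (j1,j3))"

definition tensor_3_12 :: "mat2 \<Rightarrow> mat4 \<Rightarrow> mat8" where
  "tensor_3_12 A B = (\<chi> i j. case (i, j) of ((i1,i2,i3), (j1,j2,j3)) \<Rightarrow> A $ i3 $ j3 * B $ (i1,i2) $ (j1,j2))"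

definition biseparable :: "mat8 \<Rightarrow> bool" where
  "biseparable \<rho> \<longleftrightarrow> (\<exists>(p1::real) p2 p3 r1 r23 r2 r13 r3 r12.
     0 \<le> p1 \<and> 0 \<le> p2 \<and> 0 \<le> p3 \<and> p1 + p2 + p3 = 1 \<and>
     density_mat r1 \<and> density_mat r23 \<and> density_mat r2 \<and> density_mat r13 \<and>
     density_mat r3 \<and> density_mat r12 \<and>
     \<rho> = p1 *\<^sub>R tensor_1_23 r1 r23 + p2 *\<^sub>R tensor_2_13 r2 r13
        + p3 *\<^sub>R tensor_3_12 r3 r12)"

definition genuinely_entangled :: "mat8 \<Rightarrow> bool" where
  "genuinely_entangled \<rho> \<longleftrightarrow> density_mat \<rho> \<and> \<not> biseparable \<rho>"

definition mapP :: "mat2 \<Rightarrow> mat2" where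
  "mapP X = (\<chi> i j. if i = j then (X $ 0 $ 0 + X $ 1 $ 1) / 2 else X $ i $ j)"

text \<open>L \<otimes> I \<otimes> I, I \<otimes> L \<otimes> I, I \<otimes> I \<otimes> L for a (linear) map L on M_2.\<close>
definition on_qubit1 :: "(mat2 \<Rightarrow> mat2) \<Rightarrow> mat8 \<Rightarrow> mat8" where
  "on_qubit1 L \<rho> = (\<chi> i j. case (i, j) of ((i1,i2,i3), (j1,j2,j3)) \<Rightarrow>
      L (\<chi> a b. \<rho> $ (a,i2,i3) $ (b,j2,j3)) $ i1 $ j1)"

definition on_qubit2 :: "(mat2 \<Rightarrow> mat2) \<Rightarrow> mat8 \<Rightarrow> mat8" where
  "on_qubit2 L \<rho> = (\<chi> i j. case (i, j) of ((i1,i2,i3), (j1,j2,j3)) \<Rightarrow>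
      L (\<chi> a b. \<rho> $ (i1,a,i3) $ (j1,b,j3)) $ i2 $ j2)"

definition on_qubit3 :: "(mat2 \<Rightarrow> mat2) \<Rightarrow> mat8 \<Rightarrow> mat8" where
  "on_qubit3 L \<rho> = (\<chi> i j. case (i, j) of ((i1,i2,i3), (j1,j2,j3)) \<Rightarrow>
      L (\<chi> a b. \<rho> $ (i1,i2,a) $ (j1,j2,b)) $ i3 $ j3)"

definition Phi3 :: "mat8 \<Rightarrow> mat8" where
  "Phi3 \<rho> = on_qubit1 mapP \<rho> + on_qubit2 mapP \<rho> + on_qubit3 mapP \<rho>
             + mat (trace \<rho> / 2)"

definition proj :: "complex^'n \<Rightarrow> complex^'n^'n" where
  "proj v = (\<chi> i j. v $ i * cnj (v $ j))"

definition ghz :: "complex^idx3" where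
  "ghz = (\<chi> i. if i = (0,0,0) \<or> i = (1,1,1) then complex_of_real (1 / sqrt 2) else 0)"

definition ghz_tilde :: "complex^idx3" where
  "ghz_tilde = (\<chi> i. if i = (0,0,0) then complex_of_real (1 / sqrt 2)
                      else if i = (1,1,1) then - complex_of_real (1 / sqrt 2) else 0)"

definition W_ghz :: mat8 where
  "W_ghz = Phi3 (proj ghz)"

end

theory Submission
  imports Defs "HOL-Library.Complex_Order"
begin

text \<open>
  Entrywise, \<open>W = \<Phi>\<^sub>3(|GHZ\<rangle>\<langle>GHZ|)\<close> is \<open>5/4\<close> on the diagonal at \<open>000\<close> and \<open>111\<close>,
  \<open>3/4\<close> on the rest of the diagonal and \<open>3/2\<close> at the two GHZ coherences, so
  \<open>Tr(W\<rho>) = 3/4 Tr \<rho> + 1/2 (\<rho>(000,000) + \<rho>(111,111)) + 3/2 (\<rho>(000,111) + \<rho>(111,000))\<close>.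
  For a product state across any of the three cuts the coherence \<open>\<rho>(000,111)\<close> is the
  product of an off-diagonal entry of each factor. Positivity bounds an off-diagonal entry
  of a density matrix by half the sum of the two corresponding diagonal entries, hence by
  \<open>1/2\<close>; so the coherence terms contribute at least \<open>-3/4\<close> and \<open>Tr(W\<rho>) \<ge> 0\<close>, which
  extends to biseparable mixtures by linearity. The state \<open>|GHZ~\<rangle>\<close> has coherence \<open>-1/2\<close>,
  giving \<open>3/4 + 1/2 - 3/2 = -1/4\<close>.
\<close>

lemma UNIV_2: "(UNIV :: 2 set) = {0, 1}"
  using exhaust_2 by (auto; metis zero_neq_one)

lemma sum_UNIV_2: "(\<Sum>i\<in>UNIV. f i) = f (0::2) + f 1"
  by (simp add: UNIV_2)

lemma sum_UNIV_prod: "(\<Sum>x\<in>UNIV. f x) = (\<Sum>a\<in>UNIV. \<Sum>b\<in>UNIV. f (a, b))"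
  by (simp add: sum.cartesian_product flip: UNIV_Times_UNIV)

lemma trace_matrix_mult_add_right:
  fixes A :: "'a::comm_semiring_1^'n^'n"
  shows "trace (A ** (B + C)) = trace (A ** B) + trace (A ** C)"
  by (simp add: matrix_add_ldistrib trace_add)

lemma trace_matrix_mult_scaleR_right:
  fixes A B :: "'a::real_algebra_1^'n^'n"
  shows "trace (A ** (c *\<^sub>R B)) = c *\<^sub>R trace (A ** B)"
  by (simp add: trace_def matrix_matrix_mult_def scaleR_sum_right)

lemma matrix_vector_mult_axis_component:
  fixes M :: "'a::comm_semiring_1^'n^'m"
  shows "(M *v axis j c) $ i = M $ i $ j * c"
  by (simp add: matrix_vector_mult_def axis_def if_distrib[of "(*) _"] cong: if_cong)

lemma hermitian_mat_entry:
  assumes "hermitian_mat M"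
  shows "M $ j $ i = cnj (M $ i $ j)"
  using assms unfolding hermitian_mat_def cmat_adj_def by (metis vec_lambda_beta)

lemma psd_mat_quadratic_form_nonneg:
  assumes "psd_mat M"
  shows "0 \<le> (\<Sum>i\<in>UNIV. cnj (v $ i) * (M *v v) $ i)"
  using assms unfolding psd_mat_def Let_def less_eq_complex_def by simp

lemma psd_mat_diag_nonneg:
  assumes "psd_mat M"
  shows "0 \<le> M $ i $ i"
  using psd_mat_quadratic_form_nonneg[OF assms, of "axis i 1"]
  unfolding matrix_vector_mult_axis_component
  by (simp add: axis_def if_distrib[of cnj] if_distrib[of "\<lambda>x. x * _"] cong: if_cong)

lemma quadratic_form_axis_sum:
  fixes M :: "complex^'n^'n"
  assumes "p \<noteq> q"
  shows "(\<Sum>i\<in>UNIV. cnj ((axis p x + axis q y) $ i) * (M *v (axis p x + axis q y)) $ i)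
       = cnj x * (M $ p $ p * x + M $ p $ q * y) + cnj y * (M $ q $ p * x + M $ q $ q * y)"
  unfolding matrix_vector_right_distrib vector_add_component matrix_vector_mult_axis_component
  using assms
  by (simp add: axis_def distrib_left distrib_right sum.distrib
      if_distrib[of cnj] if_distrib[of "\<lambda>x. x * _"] cong: if_cong)

lemma psd_mat_off_diag_le:
  fixes M :: "complex^'n^'n"
  assumes herm: "hermitian_mat M" and psd: "psd_mat M" and "p \<noteq> q"
  shows "2 * cmod (M $ p $ q) \<le> Re (M $ p $ p) + Re (M $ q $ q)"
proof (cases "M $ p $ q = 0")
  case True
  then show ?thesis
    using psd_mat_diag_nonneg[OF psd, of p] psd_mat_diag_nonneg[OF psd, of q]
    by (simp add: less_eq_complex_def)
next
  case False
  define b where "b = M $ p $ q"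
  \<comment> \<open>With this \<open>y\<close>, both cross terms of the form at \<open>e\<^sub>p + y e\<^sub>q\<close> equal \<open>-|b|\<close>.\<close>
  define y where "y = - cnj b / of_real (cmod b)"
  have b0: "cmod b \<noteq> 0"
    using False by (simp add: b_def)
  have b_b: "b * cnj b = of_real (cmod b) * of_real (cmod b)"
    by (simp flip: complex_norm_square of_real_mult power2_eq_square)
  have b_y: "b * y = - of_real (cmod b)"
    using b0 by (simp add: y_def b_b)
  have y_y: "cnj y * y = 1"
    using b0 by (simp add: y_def b_b mult.commute)
  have "0 \<le> cnj 1 * (M $ p $ p * 1 + b * y) + cnj y * (cnj b * 1 + M $ q $ q * y)"
    using psd_mat_quadratic_form_nonneg[OF psd, of "axis p 1 + axis q y"]
    unfolding quadratic_form_axis_sum[OF \<open>p \<noteq> q\<close>] hermitian_mat_entry[OF herm, of q p] b_def .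
  also have "\<dots> = M $ p $ p + M $ q $ q * (cnj y * y) + b * y + cnj (b * y)"
    by (simp add: algebra_simps)
  also have "\<dots> = M $ p $ p + M $ q $ q - 2 * of_real (cmod b)"
    unfolding b_y y_y by simp
  finally show ?thesis
    by (simp add: less_eq_complex_def b_def)
qed

lemma density_mat_off_diag_le:
  fixes M :: "complex^'n^'n"
  assumes "density_mat M" and "p \<noteq> q"
  shows "cmod (M $ p $ q) \<le> 1/2"
proof -
  have herm: "hermitian_mat M" and psd: "psd_mat M" and tr: "trace M = 1"
    using assms(1) unfolding density_mat_def by auto
  have "M $ p $ p + M $ q $ q = (\<Sum>i\<in>{p, q}. M $ i $ i)"
    using assms(2) by simp
  also have "\<dots> \<le> trace M"
    unfolding trace_def by (rule sum_mono2) (auto intro: psd_mat_diag_nonneg[OF psd])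
  finally have "Re (M $ p $ p) + Re (M $ q $ q) \<le> 1"
    using tr by (simp add: less_eq_complex_def)
  with psd_mat_off_diag_le[OF herm psd assms(2)] show ?thesis
    by linarith
qed

lemma hermitian_mat_proj: "hermitian_mat (proj v)"
  unfolding hermitian_mat_def cmat_adj_def proj_def by (simp add: mult.commute)

lemma psd_mat_proj: "psd_mat (proj (u :: complex^'n))"
  unfolding psd_mat_def Let_def
proof
  fix v :: "complex^'n"
  define c where "c = (\<Sum>j\<in>UNIV. cnj (u $ j) * v $ j)"
  have "(proj u *v v) $ i = u $ i * c" for i
    unfolding matrix_vector_mult_def proj_def c_def by (simp add: sum_distrib_left algebra_simps)
  then have "(\<Sum>i\<in>UNIV. cnj (v $ i) * (proj u *v v) $ i) = (\<Sum>i\<in>UNIV. cnj (v $ i) * u $ i) * c"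
    by (simp add: sum_distrib_right mult.assoc)
  also have "(\<Sum>i\<in>UNIV. cnj (v $ i) * u $ i) = cnj c"
    unfolding c_def by (simp add: mult.commute)
  also have "cnj c * c = of_real ((cmod c)^2)"
    by (metis complex_norm_square mult.commute)
  finally show "Im (\<Sum>i\<in>UNIV. cnj (v $ i) * (proj u *v v) $ i) = 0 \<and>
      0 \<le> Re (\<Sum>i\<in>UNIV. cnj (v $ i) * (proj u *v v) $ i)"
    by simp
qed

lemma density_mat_proj: "trace (proj v) = 1 \<Longrightarrow> density_mat (proj v)"
  by (simp add: density_mat_def hermitian_mat_proj psd_mat_proj)

lemma on_qubit1_mapP:
  "on_qubit1 mapP r $ (i1, i2, i3) $ (j1, j2, j3) = (if i1 = j1
     then (r $ (0, i2, i3) $ (0, j2, j3) + r $ (1, i2, i3) $ (1, j2, j3)) / 2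
     else r $ (i1, i2, i3) $ (j1, j2, j3))"
  unfolding on_qubit1_def mapP_def by simp

lemma on_qubit2_mapP:
  "on_qubit2 mapP r $ (i1, i2, i3) $ (j1, j2, j3) = (if i2 = j2
     then (r $ (i1, 0, i3) $ (j1, 0, j3) + r $ (i1, 1, i3) $ (j1, 1, j3)) / 2
     else r $ (i1, i2, i3) $ (j1, j2, j3))"
  unfolding on_qubit2_def mapP_def by simp

lemma on_qubit3_mapP:
  "on_qubit3 mapP r $ (i1, i2, i3) $ (j1, j2, j3) = (if i3 = j3
     then (r $ (i1, i2, 0) $ (j1, j2, 0) + r $ (i1, i2, 1) $ (j1, j2, 1)) / 2
     else r $ (i1, i2, i3) $ (j1, j2, j3))"
  unfolding on_qubit3_def mapP_def by simp

lemma proj_ghz_entry: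
  "proj ghz $ i $ j =
     (if i \<in> {(0,0,0), (1,1,1)} \<and> j \<in> {(0,0,0), (1,1,1)} then 1/2 else 0)"
  by (simp add: proj_def ghz_def flip: of_real_mult)

lemma proj_ghz_tilde_entry:
  "proj ghz_tilde $ i $ j =
     (if i \<in> {(0,0,0), (1,1,1)} \<and> j \<in> {(0,0,0), (1,1,1)}
      then (if i = j then 1/2 else - 1/2) else 0)"
proof -
  define c where "c = complex_of_real (1 / sqrt 2)"
  have "c * cnj c = 1/2"
    unfolding c_def by (simp flip: of_real_mult)
  then show ?thesis
    unfolding proj_def ghz_tilde_def c_def[symmetric] by auto
qed

lemma trace_proj_ghz: "trace (proj ghz) = 1"
  by (simp add: trace_def sum_UNIV_prod sum_UNIV_2 proj_ghz_entry)

lemma trace_proj_ghz_tilde: "trace (proj ghz_tilde) = 1"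
  by (simp add: trace_def sum_UNIV_prod sum_UNIV_2 proj_ghz_tilde_entry)

lemma W_ghz_entry:
  "W_ghz $ (i1, i2, i3) $ (j1, j2, j3) =
     (if (i1, i2, i3) = (j1, j2, j3) then (if i1 = i2 \<and> i2 = i3 then 5/4 else 3/4)
      else if i1 = i2 \<and> i2 = i3 \<and> j1 = j2 \<and> j2 = j3 then 3/2 else 0)"
proof -
  have bit: "(i :: 2) = 0 \<or> i = 1" for i
    using UNIV_2 by auto
  show ?thesis
    using bit[of i1] bit[of i2] bit[of i3] bit[of j1] bit[of j2] bit[of j3]
    unfolding W_ghz_def Phi3_def trace_proj_ghz
    by (elim disjE) (simp_all add: mat_def on_qubit1_mapP on_qubit2_mapP on_qubit3_mapP proj_ghz_entry)
qed

lemma trace_W_ghz: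
  "trace (W_ghz ** r) = 3/4 * trace r
     + 1/2 * (r $ (0,0,0) $ (0,0,0) + r $ (1,1,1) $ (1,1,1))
     + 3/2 * (r $ (0,0,0) $ (1,1,1) + r $ (1,1,1) $ (0,0,0))"
  unfolding trace_def matrix_matrix_mult_def
  by (simp add: W_ghz_entry sum_UNIV_prod sum_UNIV_2 algebra_simps)

lemma trace_tensor_1_23: "trace (tensor_1_23 A B) = trace A * trace B"
  by (simp add: trace_def tensor_1_23_def sum_UNIV_prod sum_UNIV_2 algebra_simps)

lemma trace_tensor_2_13: "trace (tensor_2_13 A B) = trace A * trace B"
  by (simp add: trace_def tensor_2_13_def sum_UNIV_prod sum_UNIV_2 algebra_simps)

lemma trace_tensor_3_12: "trace (tensor_3_12 A B) = trace A * trace B"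
  by (simp add: trace_def tensor_3_12_def sum_UNIV_prod sum_UNIV_2 algebra_simps)

lemma W_ghz_expectation_product_nonneg:
  fixes A :: mat2 and B :: mat4
  assumes A: "density_mat A" and B: "density_mat B"
  shows "0 \<le> 3/4 + 1/2 * (A$0$0 * B$(0,0)$(0,0) + A$1$1 * B$(1,1)$(1,1))
            + 3/2 * (A$0$1 * B$(0,0)$(1,1) + A$1$0 * B$(1,1)$(0,0))"
proof -
  have herm: "hermitian_mat A" "hermitian_mat B" and psd: "psd_mat A" "psd_mat B"
    using A B unfolding density_mat_def by auto
  define z where "z = A$0$1 * B$(0,0)$(1,1)"
  have conj: "A$1$0 * B$(1,1)$(0,0) = cnj z"
    unfolding z_def hermitian_mat_entry[OF herm(1), of 0 1]
      hermitian_mat_entry[OF herm(2), of "(0,0)" "(1,1)"]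
    by simp
  have "cmod z \<le> 1/2 * (1/2)"
    unfolding z_def norm_mult
    by (intro mult_mono density_mat_off_diag_le[OF A] density_mat_off_diag_le[OF B]) auto
  then have "- 1/4 \<le> Re z"
    using abs_Re_le_cmod[of z] by linarith
  then have coherence: "0 \<le> 3/4 + 3/2 * (z + cnj z)"
    by (simp add: complex_add_cnj less_eq_complex_def)
  have populations: "0 \<le> A$0$0 * B$(0,0)$(0,0) + A$1$1 * B$(1,1)$(1,1)"
    by (intro add_nonneg_nonneg mult_nonneg_nonneg psd_mat_diag_nonneg psd)
  have "(0::complex) \<le> 1/2"
    by (simp add: less_eq_complex_def)
  from add_nonneg_nonneg[OF coherence mult_nonneg_nonneg[OF this populations]]
  show ?thesis
    unfolding conj z_def[symmetric] by (simp add: algebra_simps)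
qed

lemma W_ghz_nonneg_product_states:
  assumes "density_mat A" and "density_mat B"
  shows "0 \<le> trace (W_ghz ** tensor_1_23 A B)"
    and "0 \<le> trace (W_ghz ** tensor_2_13 A B)"
    and "0 \<le> trace (W_ghz ** tensor_3_12 A B)"
  using W_ghz_expectation_product_nonneg[OF assms] assms
  unfolding trace_W_ghz trace_tensor_1_23 trace_tensor_2_13 trace_tensor_3_12
  by (simp_all add: density_mat_def tensor_1_23_def tensor_2_13_def tensor_3_12_def)

lemma W_ghz_nonneg_biseparable:
  assumes "biseparable \<rho>"
  shows "0 \<le> trace (W_ghz ** \<rho>)"
proof -
  obtain p1 p2 p3 r1 r23 r2 r13 r3 r12 where
    p: "0 \<le> p1" "0 \<le> p2" "0 \<le> p3" and
    r: "density_mat r1" "density_mat r23" "density_mat r2" "density_mat r13"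
      "density_mat r3" "density_mat r12" and
    \<rho>: "\<rho> = p1 *\<^sub>R tensor_1_23 r1 r23 + p2 *\<^sub>R tensor_2_13 r2 r13 + p3 *\<^sub>R tensor_3_12 r3 r12"
    using assms unfolding biseparable_def by blast
  have "trace (W_ghz ** \<rho>) = p1 *\<^sub>R trace (W_ghz ** tensor_1_23 r1 r23)
      + p2 *\<^sub>R trace (W_ghz ** tensor_2_13 r2 r13) + p3 *\<^sub>R trace (W_ghz ** tensor_3_12 r3 r12)"
    unfolding \<rho> trace_matrix_mult_add_right trace_matrix_mult_scaleR_right ..
  then show ?thesis
    using p W_ghz_nonneg_product_states[OF r(1,2)] W_ghz_nonneg_product_states[OF r(3,4)]
      W_ghz_nonneg_product_states[OF r(5,6)]
    by (simp add: scaleR_nonneg_nonneg)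
qed

theorem proposition2:
  shows "(\<forall>\<rho>. biseparable \<rho> \<longrightarrow>
            Im (trace (W_ghz ** \<rho>)) = 0 \<and> 0 \<le> Re (trace (W_ghz ** \<rho>)))
     \<and> genuinely_entangled (proj ghz_tilde)
     \<and> trace (W_ghz ** proj ghz_tilde) = - 1 / 4"
proof -
  have witness: "Im (trace (W_ghz ** \<rho>)) = 0 \<and> 0 \<le> Re (trace (W_ghz ** \<rho>))"
    if "biseparable \<rho>" for \<rho>
    using W_ghz_nonneg_biseparable[OF that] by (simp add: less_eq_complex_def)
  have tilde_value: "trace (W_ghz ** proj ghz_tilde) = - 1 / 4"
    by (simp add: trace_W_ghz trace_proj_ghz_tilde proj_ghz_tilde_entry)
  then have "\<not> biseparable (proj ghz_tilde)"
    using witness by force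
  then have "genuinely_entangled (proj ghz_tilde)"
    unfolding genuinely_entangled_def using density_mat_proj[OF trace_proj_ghz_tilde] by blast
  with witness tilde_value show ?thesis
    by blast
qed

end
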